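(* Let $(H,v)$ be a rooted graph. Then for any integers $k\ge 0$ and $g\ge 1$, \[ X_{P^k(K_g,\,H)}=(g-1)!\sum_{l=0}^{g-1}(1-l)\,e_l\,X_{H^{k+g-1-l}}. \]
   Context: All graphs are finite simple graphs. The chromatic symmetric function of a graph $G$ is $X_G=\sum_{\kappa}\prod_{v\in V(G)}x_{\kappa(v)}$, where $\kappa$ ranges over proper colorings $\kappa:V(G)\to\{1,2,\dots\}$. $e_l$ is the $l$-th elementary symmetric function, $e_0=1$. $K_g$ is the complete graph on $g$ vertices, rooted at any vertex. For rooted graphs $(G,u)$, $(H,v)$ and $k\ge 0$, $P^k(G,H)$ is obtained from the disjoint union of $G$ and $H$ by adding a path of length $k$ (with $k-1$ new internal vertices) joining $u$ and $v$ (for $k=0$, $u$ and $v$ are identified). The tailed graph $H^k$ is $P^k(H,K_1)$, i.e., $H$ with a pendant path of length $k$ attached at its root. *)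

theory Defs
  imports Main "HOL-Library.Multiset" "HOL-Library.FuncSet"
begin

definition simple_graph :: "'a set \<Rightarrow> 'a set set \<Rightarrow> bool" where
  "simple_graph V E \<longleftrightarrow> finite V \<and> (\<forall>e\<in>E. e \<subseteq> V \<and> card e = 2)"

text \<open>Symmetric functions (formal power series in the variables x_0, x_1, ...)
  represented by their coefficient function on monomials; a monomial is a
  finite multiset of variable indices.\<close>
type_synonym sym_fun = "nat multiset \<Rightarrow> int"

definition sf_mult :: "sym_fun \<Rightarrow> sym_fun \<Rightarrow> sym_fun" where
  "sf_mult f g \<alpha> = (\<Sum>\<beta>\<in>{\<beta>. \<beta> \<subseteq># \<alpha>}. f \<beta> * g (\<alpha> - \<beta>))"

definition elem_sf :: "nat \<Rightarrow> sym_fun" where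
  "elem_sf l \<alpha> = (if (\<forall>i. count \<alpha> i \<le> 1) \<and> size \<alpha> = l then 1 else 0)"

definition proper_colorings :: "'a set \<Rightarrow> 'a set set \<Rightarrow> ('a \<Rightarrow> nat) set" where
  "proper_colorings V E =
     {\<kappa> \<in> V \<rightarrow>\<^sub>E (UNIV :: nat set). \<forall>e\<in>E. \<forall>x\<in>e. \<forall>y\<in>e. x \<noteq> y \<longrightarrow> \<kappa> x \<noteq> \<kappa> y}"

definition csf :: "'a set \<Rightarrow> 'a set set \<Rightarrow> sym_fun" where
  "csf V E \<alpha> = int (card {\<kappa> \<in> proper_colorings V E. image_mset \<kappa> (mset_set V) = \<alpha>})"

text \<open>Node 0 is the root v of H; nodes
  0,1,...,k form the path of length k; nodes k,...,k+g-1 form the clique K_g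
  (rooted at node k).  For k = 0 the root of K_g is identified with v.\<close>
definition cp_node :: "'a \<Rightarrow> nat \<Rightarrow> 'a + nat" where
  "cp_node v i = (if i = 0 then Inl v else Inr i)"

definition cp_verts :: "'a set \<Rightarrow> nat \<Rightarrow> nat \<Rightarrow> ('a + nat) set" where
  "cp_verts V g k = Inl ` V \<union> Inr ` {1..k+g-1}"

definition cp_edges :: "'a set set \<Rightarrow> 'a \<Rightarrow> nat \<Rightarrow> nat \<Rightarrow> ('a + nat) set set" where
  "cp_edges E v g k =
     (\<lambda>e. Inl ` e) ` E
     \<union> {{cp_node v i, cp_node v (i+1)} | i. i < k}
     \<union> {{cp_node v i, cp_node v j} | i j. k \<le> i \<and> i < j \<and> j \<le> k+g-1}"

text \<open>Tailed graph H^m: H with a pendant path of length m at the root v,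
  new vertices Inr 1, ..., Inr m.\<close>
definition tail_verts :: "'a set \<Rightarrow> nat \<Rightarrow> ('a + nat) set" where
  "tail_verts V m = Inl ` V \<union> Inr ` {1..m}"

definition tail_edges :: "'a set set \<Rightarrow> 'a \<Rightarrow> nat \<Rightarrow> ('a + nat) set set" where
  "tail_edges E v m =
     (\<lambda>e. Inl ` e) ` E \<union> {{cp_node v i, cp_node v (i+1)} | i. i < m}"

end

theory Submission
  imports Defs "HOL-Combinatorics.Multiset_Permutations"
begin

(* Fix a proper colouring kappa of the tailed graph H^k and let c be the colour of its last
   path vertex.  The proper colourings of P^k(K_g, H) extending kappa give the remaining g - 1
   clique vertices distinct colours other than c; they contribute (g-1)! D_{g-1}(c), where
   D_m(c) (fresh_elem_sf) is the sum of the squarefree monomials of degree m avoiding x_c.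
   The proper colourings of H^(k+m) extending kappa continue the path by a colour sequence
   whose consecutive entries differ, starting away from c; let B_m(c) (chain_sf) be the
   generating function of these sequences.  Splitting off the first new colour gives
   recursions for D and B, from which D_m(c) = sum_l (1 - l) e_l B_(m-l)(c) follows by
   induction on m.  Summing over kappa yields the theorem, because multiplication by e_l
   commutes with the sum over kappa. *)

section \<open>Products of symmetric functions\<close>

lemma finite_submultisets: "finite {\<beta>. \<beta> \<subseteq># \<alpha>}"
proof (rule finite_subset)
  show "{\<beta>. \<beta> \<subseteq># \<alpha>} \<subseteq> mset ` {xs. set xs \<subseteq> set_mset \<alpha> \<and> length xs \<le> size \<alpha>}"
  proof
    fix \<beta> assume "\<beta> \<in> {\<beta>. \<beta> \<subseteq># \<alpha>}"
    moreover obtain xs where "mset xs = \<beta>" using ex_mset by blast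
    ultimately have "set xs \<subseteq> set_mset \<alpha>" "length xs \<le> size \<alpha>" "\<beta> = mset xs"
      by (auto dest: mset_subset_eqD size_mset_mono)
    then show "\<beta> \<in> mset ` {xs. set xs \<subseteq> set_mset \<alpha> \<and> length xs \<le> size \<alpha>}"
      by blast
  qed
  show "finite (mset ` {xs. set xs \<subseteq> set_mset \<alpha> \<and> length xs \<le> size \<alpha>})"
    by (simp add: finite_lists_length_le)
qed

lemma finite_lists_with_mset: "finite {s. length s = m \<and> mset s = \<gamma> \<and> P s}"
proof -
  obtain xs where "mset xs = \<gamma>" using ex_mset by blast
  then show ?thesis using mset_eq_finite[of xs] by (auto elim: rev_finite_subset)
qed

lemma sf_mult_right_unit: "sf_mult f (\<lambda>\<beta>. if \<beta> = {#} then 1 else 0) \<alpha> = f \<alpha>"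
proof -
  have "sf_mult f (\<lambda>\<beta>. if \<beta> = {#} then 1 else 0) \<alpha> = (\<Sum>\<beta>\<in>{\<beta>. \<beta> \<subseteq># \<alpha>}. if \<beta> = \<alpha> then f \<beta> else 0)"
    unfolding sf_mult_def by (intro sum.cong) (auto dest: subset_mset.add_diff_inverse)
  also have "\<dots> = f \<alpha>" using finite_submultisets[of \<alpha>] by simp
  finally show ?thesis .
qed

lemma sf_mult_shifted_sum:
  assumes "finite {x\<in>X. f x \<subseteq># \<alpha>}"
  shows "sf_mult e (\<lambda>\<delta>. \<Sum>x\<in>{x\<in>X. f x \<subseteq># \<delta>}. h x (\<delta> - f x)) \<alpha>
       = (\<Sum>x\<in>{x\<in>X. f x \<subseteq># \<alpha>}. sf_mult e (h x) (\<alpha> - f x))"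
proof -
  let ?C = "{x\<in>X. f x \<subseteq># \<alpha>}"
  have split_iff: "\<beta> \<subseteq># \<alpha> \<and> f x \<subseteq># \<alpha> - \<beta> \<longleftrightarrow> f x \<subseteq># \<alpha> \<and> \<beta> \<subseteq># \<alpha> - f x" for \<beta> x
    by (metis subset_mset.le_diff_conv2 add.commute mset_subset_eq_add_left subset_mset.order_trans)
  have "sf_mult e (\<lambda>\<delta>. \<Sum>x\<in>{x\<in>X. f x \<subseteq># \<delta>}. h x (\<delta> - f x)) \<alpha>
      = (\<Sum>\<beta>\<in>{\<beta>. \<beta> \<subseteq># \<alpha>}. \<Sum>x\<in>?C. if f x \<subseteq># \<alpha> - \<beta> then e \<beta> * h x (\<alpha> - \<beta> - f x) else 0)"
    unfolding sf_mult_def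
  proof (rule sum.cong[OF refl])
    fix \<beta> assume "\<beta> \<in> {\<beta>. \<beta> \<subseteq># \<alpha>}"
    then have "{x\<in>X. f x \<subseteq># \<alpha> - \<beta>} = {x\<in>?C. f x \<subseteq># \<alpha> - \<beta>}" using split_iff by auto
    then show "e \<beta> * (\<Sum>x\<in>{x\<in>X. f x \<subseteq># \<alpha> - \<beta>}. h x (\<alpha> - \<beta> - f x))
        = (\<Sum>x\<in>?C. if f x \<subseteq># \<alpha> - \<beta> then e \<beta> * h x (\<alpha> - \<beta> - f x) else 0)"
      by (simp only: sum_distrib_left sum.inter_filter[OF assms] if_distrib mult_zero_right)
  qed
  also have "\<dots> = (\<Sum>x\<in>?C. \<Sum>\<beta>\<in>{\<beta>. \<beta> \<subseteq># \<alpha>}. if f x \<subseteq># \<alpha> - \<beta> then e \<beta> * h x (\<alpha> - \<beta> - f x) else 0)"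
    by (rule sum.swap)
  also have "\<dots> = (\<Sum>x\<in>?C. sf_mult e (h x) (\<alpha> - f x))"
    unfolding sf_mult_def
  proof (rule sum.cong[OF refl])
    fix x assume "x \<in> ?C"
    then have "{\<beta>. \<beta> \<subseteq># \<alpha> - f x} = {\<beta>\<in>{\<beta>. \<beta> \<subseteq># \<alpha>}. f x \<subseteq># \<alpha> - \<beta>}" using split_iff by auto
    then show "(\<Sum>\<beta>\<in>{\<beta>. \<beta> \<subseteq># \<alpha>}. if f x \<subseteq># \<alpha> - \<beta> then e \<beta> * h x (\<alpha> - \<beta> - f x) else 0)
       = (\<Sum>\<beta>\<in>{\<beta>. \<beta> \<subseteq># \<alpha> - f x}. e \<beta> * h x (\<alpha> - f x - \<beta>))"
      by (simp add: sum.inter_filter[OF finite_submultisets, symmetric] diff_diff_add add.commute)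
  qed
  finally show ?thesis .
qed

section \<open>Counting colour sequences\<close>

definition chain_sf :: "nat \<Rightarrow> nat \<Rightarrow> sym_fun" where
  "chain_sf m c \<gamma> = int (card {s. length s = m \<and> mset s = \<gamma> \<and> distinct_adj (c # s)})"

lemma chain_sf_0: "chain_sf 0 c = (\<lambda>\<gamma>. if \<gamma> = {#} then 1 else 0)"
proof
  fix \<gamma>
  have "{s. length s = 0 \<and> mset s = \<gamma> \<and> distinct_adj (c # s)} = (if \<gamma> = {#} then {[]} else {})"
    by auto
  then show "chain_sf 0 c \<gamma> = (if \<gamma> = {#} then 1 else 0)" by (simp add: chain_sf_def)
qed

lemma chain_sf_Suc: "chain_sf (Suc m) c \<gamma> = (\<Sum>d\<in>set_mset \<gamma> - {c}. chain_sf m d (\<gamma> - {#d#}))"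
proof -
  let ?S = "\<lambda>m c \<gamma>. {s. length s = m \<and> mset s = \<gamma> \<and> distinct_adj (c # s)}"
  have "?S (Suc m) c \<gamma> = (\<Union>d\<in>set_mset \<gamma> - {c}. (#) d ` ?S m d (\<gamma> - {#d#}))"
    by (auto simp: length_Suc_conv distinct_adj_Cons) (metis insert_DiffM)
  then have "card (?S (Suc m) c \<gamma>) = (\<Sum>d\<in>set_mset \<gamma> - {c}. card ((#) d ` ?S m d (\<gamma> - {#d#})))"
    by (auto intro!: card_UN_disjoint simp: finite_lists_with_mset)
  then show ?thesis by (simp add: chain_sf_def card_image)
qed

lemma sf_mult_chain_sf_Suc:
  "sf_mult e (chain_sf (Suc m) c) \<gamma> = (\<Sum>d\<in>set_mset \<gamma> - {c}. sf_mult e (chain_sf m d) (\<gamma> - {#d#}))"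
proof -
  have letters: "set_mset \<delta> - {c} = {d\<in>-{c}. {#d#} \<subseteq># \<delta>}" for \<delta> :: "nat multiset"
    by auto
  have "sf_mult e (chain_sf (Suc m) c) \<gamma>
      = sf_mult e (\<lambda>\<delta>. \<Sum>d\<in>{d\<in>-{c}. {#d#} \<subseteq># \<delta>}. chain_sf m d (\<delta> - {#d#})) \<gamma>"
    by (simp only: chain_sf_Suc[abs_def] letters)
  also have "\<dots> = (\<Sum>d\<in>{d\<in>-{c}. {#d#} \<subseteq># \<gamma>}. sf_mult e (chain_sf m d) (\<gamma> - {#d#}))"
    by (rule sf_mult_shifted_sum) (simp flip: letters)
  finally show ?thesis by (simp only: letters)
qed

definition fresh_elem_sf :: "nat \<Rightarrow> nat \<Rightarrow> sym_fun" where
  "fresh_elem_sf m c \<gamma> = (if c \<in># \<gamma> then 0 else elem_sf m \<gamma>)"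

lemma mset_set_set_mset_if_count_le_1: "\<forall>i. count \<gamma> i \<le> 1 \<Longrightarrow> mset_set (set_mset \<gamma>) = \<gamma>"
  by (rule multiset_eqI) (metis count_eq_zero_iff count_mset_set(1,3) finite_set_mset le_neq_implies_less less_one)

text \<open>A squarefree monomial of degree \<open>m + 1\<close> occurs on the right once for each of its
  variables other than \<open>x\<^sub>c\<close>; the first term corrects this count to \<open>[x\<^sub>c does not occur]\<close>.\<close>
lemma fresh_elem_sf_Suc:
  "fresh_elem_sf (Suc m) c \<gamma>
     = - int m * elem_sf (Suc m) \<gamma> + (\<Sum>d\<in>set_mset \<gamma> - {c}. fresh_elem_sf m d (\<gamma> - {#d#}))"
proof (cases "(\<forall>i. count \<gamma> i \<le> 1) \<and> size \<gamma> = Suc m")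
  case True
  then have "fresh_elem_sf m d (\<gamma> - {#d#}) = 1" if "d \<in># \<gamma>" for d
    using that by (auto simp: fresh_elem_sf_def elem_sf_def size_Diff_singleton count_eq_zero_iff[symmetric]
        intro: le_antisym)
  moreover have "card (set_mset \<gamma>) = Suc m"
    using True mset_set_set_mset_if_count_le_1 by (metis size_mset_set)
  ultimately have "(\<Sum>d\<in>set_mset \<gamma> - {c}. fresh_elem_sf m d (\<gamma> - {#d#}))
      = (if c \<in># \<gamma> then int m else int m + 1)"
    by (simp add: card_Diff_singleton_if)
  then show ?thesis using True by (simp add: fresh_elem_sf_def elem_sf_def)
next
  case False
  have "fresh_elem_sf m d (\<gamma> - {#d#}) = 0" if "d \<in># \<gamma>" for d
  proof (rule ccontr)
    assume "fresh_elem_sf m d (\<gamma> - {#d#}) \<noteq> 0"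
    then have rest: "\<forall>i. count (\<gamma> - {#d#}) i \<le> 1" "size (\<gamma> - {#d#}) = m" "d \<notin># \<gamma> - {#d#}"
      by (auto simp: fresh_elem_sf_def elem_sf_def split: if_splits)
    have count_split: "count \<gamma> i = count (\<gamma> - {#d#}) i + (if i = d then 1 else 0)" for i
      using that by (cases "i = d") (auto simp flip: count_greater_zero_iff)
    have "count \<gamma> i \<le> 1" for i
      using count_split[of i] rest(1)[rule_format, of i] rest(3)
      by (cases "i = d") (simp_all add: not_in_iff del: count_diff)
    moreover have "size \<gamma> = Suc m"
      using that rest(2) by (metis size_add_mset insert_DiffM)
    ultimately show False using False by blast
  qed
  moreover have "fresh_elem_sf (Suc m) c \<gamma> = 0" "elem_sf (Suc m) \<gamma> = 0"
    using False by (auto simp: fresh_elem_sf_def elem_sf_def)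
  ultimately show ?thesis by simp
qed

lemma fresh_elem_sf_eq_chain_sum:
  "fresh_elem_sf m c \<gamma> = (\<Sum>l=0..m. (1 - int l) * sf_mult (elem_sf l) (chain_sf (m - l) c) \<gamma>)"
proof (induction m arbitrary: c \<gamma>)
  case 0
  then show ?case
    by (simp add: chain_sf_0 sf_mult_right_unit fresh_elem_sf_def elem_sf_def)
next
  case (Suc m)
  have "(\<Sum>l=0..m. (1 - int l) * sf_mult (elem_sf l) (chain_sf (Suc m - l) c) \<gamma>)
      = (\<Sum>l=0..m. \<Sum>d\<in>set_mset \<gamma> - {c}. (1 - int l) * sf_mult (elem_sf l) (chain_sf (m - l) d) (\<gamma> - {#d#}))"
    by (intro sum.cong refl) (simp add: Suc_diff_le sf_mult_chain_sf_Suc sum_distrib_left)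
  also have "\<dots> = (\<Sum>d\<in>set_mset \<gamma> - {c}. fresh_elem_sf m d (\<gamma> - {#d#}))"
    by (subst sum.swap) (simp only: Suc.IH)
  finally show ?case
    by (simp add: fresh_elem_sf_Suc chain_sf_0 sf_mult_right_unit)
qed

lemma card_distinct_lists_with_mset:
  "int (card {s. length s = m \<and> mset s = \<gamma> \<and> distinct (c # s)}) = int (fact m) * fresh_elem_sf m c \<gamma>"
proof (cases "fresh_elem_sf m c \<gamma> = 1")
  case True
  then have sq: "\<forall>i. count \<gamma> i \<le> 1" "size \<gamma> = m" "c \<notin># \<gamma>"
    by (auto simp: fresh_elem_sf_def elem_sf_def split: if_splits)
  have "{s. length s = m \<and> mset s = \<gamma> \<and> distinct (c # s)} = permutations_of_set (set_mset \<gamma>)"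
  proof (intro equalityI subsetI)
    fix s assume "s \<in> permutations_of_set (set_mset \<gamma>)"
    then have "set s = set_mset \<gamma>" "distinct s" by (auto simp: permutations_of_set_def)
    moreover from this have "mset s = \<gamma>"
      using sq(1) mset_set_set_mset_if_count_le_1 by (metis mset_set_set)
    ultimately show "s \<in> {s. length s = m \<and> mset s = \<gamma> \<and> distinct (c # s)}"
      using sq by auto
  qed (auto simp: permutations_of_set_def)
  moreover have "card (set_mset \<gamma>) = m"
    using sq mset_set_set_mset_if_count_le_1 by (metis size_mset_set)
  ultimately show ?thesis using True by simp
next
  case False
  then have "fresh_elem_sf m c \<gamma> = 0" by (auto simp: fresh_elem_sf_def elem_sf_def split: if_splits)
  moreover have "{s. length s = m \<and> mset s = \<gamma> \<and> distinct (c # s)} = {}"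
    unfolding Collect_empty_eq
  proof (intro allI notI)
    fix s assume s: "length s = m \<and> mset s = \<gamma> \<and> distinct (c # s)"
    then have "count \<gamma> i \<le> 1" for i
      using distinct_count_atmost_1[of s] by (metis distinct.simps(2) nle_le zero_le_one)
    then show False using s False by (auto simp: fresh_elem_sf_def elem_sf_def)
  qed
  ultimately show ?thesis by (metis card.empty mult_zero_right of_nat_0)
qed

section \<open>Extending a colouring by new vertices\<close>

definition properly_colors :: "'b set set \<Rightarrow> ('b \<Rightarrow> nat) \<Rightarrow> bool" where
  "properly_colors E \<kappa> \<longleftrightarrow> (\<forall>e\<in>E. \<forall>x\<in>e. \<forall>y\<in>e. x \<noteq> y \<longrightarrow> \<kappa> x \<noteq> \<kappa> y)"

lemma proper_colorings_iff:
  "\<kappa> \<in> proper_colorings V E \<longleftrightarrow> \<kappa> \<in> V \<rightarrow>\<^sub>E UNIV \<and> properly_colors E \<kappa>"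
  by (simp add: proper_colorings_def properly_colors_def)

lemma properly_colors_Un [simp]:
  "properly_colors (A \<union> B) \<kappa> \<longleftrightarrow> properly_colors A \<kappa> \<and> properly_colors B \<kappa>"
  unfolding properly_colors_def by blast

lemma properly_colors_cong:
  "(\<And>x. x \<in> \<Union>E \<Longrightarrow> \<kappa> x = \<kappa>' x) \<Longrightarrow> properly_colors E \<kappa> \<longleftrightarrow> properly_colors E \<kappa>'"
  unfolding properly_colors_def by (metis UnionI)

lemma finite_colorings_below:
  assumes "finite W"
  shows "finite {\<kappa>\<in>proper_colorings W F. image_mset \<kappa> (mset_set W) \<subseteq># \<alpha>}"
proof (rule finite_subset)
  show "{\<kappa>\<in>proper_colorings W F. image_mset \<kappa> (mset_set W) \<subseteq># \<alpha>} \<subseteq> W \<rightarrow>\<^sub>E set_mset \<alpha>"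
    using assms by (auto simp: proper_colorings_iff PiE_iff extensional_def
        intro: mset_subset_eqD[of "image_mset _ (mset_set W)"])
  show "finite (W \<rightarrow>\<^sub>E set_mset \<alpha>)" using assms by (simp add: finite_PiE)
qed

text \<open>The vertex \<open>Inr (k + 1 + i)\<close> receives the colour \<open>s ! i\<close>.\<close>
definition extend_coloring :: "('a + nat \<Rightarrow> nat) \<Rightarrow> ('a + nat) set \<Rightarrow> nat \<Rightarrow> nat list \<Rightarrow> 'a + nat \<Rightarrow> nat" where
  "extend_coloring \<kappa> W k s =
     restrict (\<lambda>x. if x \<in> W then \<kappa> x else s ! (projr x - Suc k)) (W \<union> Inr ` {Suc k..k + length s})"

lemma extend_coloring_old: "x \<in> W \<Longrightarrow> extend_coloring \<kappa> W k s x = \<kappa> x"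
  by (simp add: extend_coloring_def)

lemma extend_coloring_new:
  "i < length s \<Longrightarrow> Inr (Suc (k + i)) \<notin> W \<Longrightarrow> extend_coloring \<kappa> W k s (Inr (Suc (k + i))) = s ! i"
  by (simp add: extend_coloring_def)

lemma extend_coloring_PiE: "extend_coloring \<kappa> W k s \<in> (W \<union> Inr ` {Suc k..k + length s}) \<rightarrow>\<^sub>E UNIV"
  by (simp add: extend_coloring_def)

lemma image_mset_extend_coloring:
  assumes "finite W" and "W \<inter> Inr ` {Suc k..k + length s} = {}"
  shows "image_mset (extend_coloring \<kappa> W k s) (mset_set (W \<union> Inr ` {Suc k..k + length s}))
       = image_mset \<kappa> (mset_set W) + mset s"
proof -
  let ?\<kappa>' = "extend_coloring \<kappa> W k s"
  have "image_mset ?\<kappa>' (mset_set (Inr ` {Suc k..k + length s}))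
      = image_mset (\<lambda>i. ?\<kappa>' (Inr (Suc (k + i)))) (mset_set {0..<length s})"
  proof -
    have "{Suc k..k + length s} = (\<lambda>i. Suc (k + i)) ` {0..<length s}"
    proof (intro equalityI subsetI)
      fix j assume "j \<in> {Suc k..k + length s}"
      then have "j = Suc (k + (j - Suc k))" "j - Suc k \<in> {0..<length s}" by auto
      then show "j \<in> (\<lambda>i. Suc (k + i)) ` {0..<length s}" by blast
    qed auto
    then have new: "Inr ` {Suc k..k + length s} = (\<lambda>i. Inr (Suc (k + i))) ` {0..<length s}"
      by (simp add: image_image)
    have "inj_on (\<lambda>i. Inr (Suc (k + i)) :: 'a + nat) {0..<length s}"
      by (auto simp: inj_on_def)
    then show ?thesis
      by (simp only: new image_mset_mset_set[symmetric] multiset.map_comp comp_def)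
  qed
  also have "\<dots> = image_mset ((!) s) (mset_set {0..<length s})"
  proof (rule image_mset_cong)
    fix i assume "i \<in># mset_set {0..<length s}"
    moreover from this have "Inr (Suc (k + i)) \<notin> W" using assms(2) by auto
    ultimately show "?\<kappa>' (Inr (Suc (k + i))) = s ! i" by (simp add: extend_coloring_new)
  qed
  also have "\<dots> = mset s"
    by (metis map_nth mset_map mset_upt)
  finally have "image_mset ?\<kappa>' (mset_set (Inr ` {Suc k..k + length s})) = mset s" .
  moreover have "image_mset ?\<kappa>' (mset_set W) = image_mset \<kappa> (mset_set W)"
    using assms(1) by (intro image_mset_cong) (simp add: extend_coloring_old)
  ultimately show ?thesis
    using assms by (simp add: mset_set_Union)
qed

lemma extend_coloring_restrict:
  assumes "x \<in> (W \<union> Inr ` {Suc k..k + m}) \<rightarrow>\<^sub>E UNIV"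
  shows "extend_coloring (restrict x W) W k (map (\<lambda>i. x (Inr (Suc (k + i)))) [0..<m]) = x"
proof (rule PiE_ext[OF _ assms])
  show "extend_coloring (restrict x W) W k (map (\<lambda>i. x (Inr (Suc (k + i)))) [0..<m])
      \<in> (W \<union> Inr ` {Suc k..k + m}) \<rightarrow>\<^sub>E UNIV"
    using extend_coloring_PiE by (metis length_map length_upt minus_nat.diff_0)
next
  fix y assume "y \<in> W \<union> Inr ` {Suc k..k + m}"
  then show "extend_coloring (restrict x W) W k (map (\<lambda>i. x (Inr (Suc (k + i)))) [0..<m]) y = x y"
    by (auto simp: extend_coloring_def)
qed

lemma restrict_extend_coloring:
  assumes "\<kappa> \<in> W \<rightarrow>\<^sub>E UNIV" and "W \<inter> Inr ` {Suc k..k + length s} = {}"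
  shows "restrict (extend_coloring \<kappa> W k s) W = \<kappa>"
    and "map (\<lambda>i. extend_coloring \<kappa> W k s (Inr (Suc (k + i)))) [0..<length s] = s"
proof -
  show "restrict (extend_coloring \<kappa> W k s) W = \<kappa>"
    by (rule PiE_ext[OF _ assms(1)]) (simp_all add: extend_coloring_old)
  have "Inr (Suc (k + i)) \<notin> W" if "i < length s" for i
    using assms(2) that by auto
  then show "map (\<lambda>i. extend_coloring \<kappa> W k s (Inr (Suc (k + i)))) [0..<length s] = s"
    by (intro nth_equalityI) (simp_all add: extend_coloring_new)
qed

lemma csf_extend_vertices:
  fixes W :: "('a + nat) set"
  assumes "finite W" and "W \<inter> Inr ` {Suc k..k + m} = {}" and "\<forall>e\<in>F. e \<subseteq> W"
  shows "csf (W \<union> Inr ` {Suc k..k + m}) (F \<union> F') \<alpha> =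
    (\<Sum>\<kappa>\<in>{\<kappa>\<in>proper_colorings W F. image_mset \<kappa> (mset_set W) \<subseteq># \<alpha>}.
       int (card {s. length s = m \<and> mset s = \<alpha> - image_mset \<kappa> (mset_set W)
                      \<and> properly_colors F' (extend_coloring \<kappa> W k s)}))"
proof -
  let ?W' = "W \<union> Inr ` {Suc k..k + m}"
  let ?img = "\<lambda>\<kappa>. image_mset \<kappa> (mset_set W)"
  let ?C = "{\<kappa>\<in>proper_colorings W F. ?img \<kappa> \<subseteq># \<alpha>}"
  let ?S = "\<lambda>\<kappa>. {s. length s = m \<and> mset s = \<alpha> - ?img \<kappa> \<and> properly_colors F' (extend_coloring \<kappa> W k s)}"
  let ?L = "{\<kappa>' \<in> proper_colorings ?W' (F \<union> F'). image_mset \<kappa>' (mset_set ?W') = \<alpha>}"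
  have F_old: "properly_colors F (extend_coloring \<kappa> W k s) \<longleftrightarrow> properly_colors F \<kappa>" for \<kappa> s
    by (intro properly_colors_cong extend_coloring_old) (use assms(3) in blast)
  have img: "image_mset (extend_coloring \<kappa> W k s) (mset_set ?W') = ?img \<kappa> + mset s"
    if "length s = m" for \<kappa> s
    using image_mset_extend_coloring[of W k s \<kappa>] assms(1,2) that by simp
  let ?join = "\<lambda>(\<kappa>, s). extend_coloring \<kappa> W k s"
  let ?split = "\<lambda>x. (restrict x W, map (\<lambda>i. x (Inr (Suc (k + i)))) [0..<m])"
  have "bij_betw ?join (Sigma ?C ?S) ?L"
  proof (rule bij_betw_byWitness[where f' = ?split])
    show "\<forall>p\<in>Sigma ?C ?S. ?split (?join p) = p"
    proof
      fix p assume "p \<in> Sigma ?C ?S"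
      then obtain \<kappa> s where "p = (\<kappa>, s)" "\<kappa> \<in> W \<rightarrow>\<^sub>E UNIV" "length s = m"
        by (auto simp: proper_colorings_iff)
      then show "?split (?join p) = p"
        using restrict_extend_coloring[of \<kappa> W k s] assms(2) by simp
    qed
    show "\<forall>x\<in>?L. ?join (?split x) = x"
      by (auto simp: proper_colorings_iff extend_coloring_restrict)
    show "?join ` Sigma ?C ?S \<subseteq> ?L"
    proof
      fix y assume "y \<in> ?join ` Sigma ?C ?S"
      then obtain \<kappa> s where y: "y = extend_coloring \<kappa> W k s" and \<kappa>: "\<kappa> \<in> ?C" and s: "s \<in> ?S \<kappa>"
        by auto
      have "y \<in> ?W' \<rightarrow>\<^sub>E UNIV" using extend_coloring_PiE[of \<kappa> W k s] s y by simp
      moreover have "properly_colors (F \<union> F') y" using \<kappa> s F_old by (simp add: y proper_colorings_iff)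
      moreover have "image_mset y (mset_set ?W') = \<alpha>"
        using img \<kappa> s y by (simp add: subset_mset.add_diff_inverse)
      ultimately show "y \<in> ?L" by (simp add: proper_colorings_iff)
    qed
    show "?split ` ?L \<subseteq> Sigma ?C ?S"
    proof (rule image_subsetI)
      fix x assume x: "x \<in> ?L"
      let ?\<kappa> = "restrict x W" and ?s = "map (\<lambda>i. x (Inr (Suc (k + i)))) [0..<m]"
      have x_eq: "extend_coloring ?\<kappa> W k ?s = x"
        using x by (simp add: proper_colorings_iff extend_coloring_restrict)
      then have "?img ?\<kappa> + mset ?s = \<alpha>" using x img[of ?s ?\<kappa>] by simp
      then show "?split x \<in> Sigma ?C ?S"
        using x F_old[of ?\<kappa> ?s] by (auto simp: x_eq proper_colorings_iff)
    qed
  qed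
  then have "card ?L = card (Sigma ?C ?S)" by (simp add: bij_betw_same_card)
  also have "\<dots> = (\<Sum>\<kappa>\<in>?C. card (?S \<kappa>))"
    using finite_colorings_below[OF assms(1)] by (simp add: finite_lists_with_mset)
  finally show ?thesis by (simp add: csf_def)
qed

section \<open>Paths, cliques and tailed graphs\<close>

lemma properly_colors_edge_family:
  "properly_colors {{x i, y i} | i. P i} f \<longleftrightarrow> (\<forall>i. P i \<longrightarrow> x i \<noteq> y i \<longrightarrow> f (x i) \<noteq> f (y i))"
  unfolding properly_colors_def by auto

lemma properly_colors_edge_family2:
  "properly_colors {{x i j, y i j} | i j. P i j} f
     \<longleftrightarrow> (\<forall>i j. P i j \<longrightarrow> x i j \<noteq> y i j \<longrightarrow> f (x i j) \<noteq> f (y i j))"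
  unfolding properly_colors_def by auto metis

lemma properly_colors_path_edges:
  assumes "inj a" and "length t = Suc m" and "\<And>i. i \<le> m \<Longrightarrow> f (a (k + i)) = t ! i"
  shows "properly_colors {{a i, a (i + 1)} | i. k \<le> i \<and> i < k + m} f \<longleftrightarrow> distinct_adj t"
proof -
  have "properly_colors {{a i, a (i + 1)} | i. k \<le> i \<and> i < k + m} f
      \<longleftrightarrow> (\<forall>i. k \<le> i \<and> i < k + m \<longrightarrow> f (a i) \<noteq> f (a (i + 1)))"
    using assms(1) by (simp add: properly_colors_edge_family inj_eq)
  also have "\<dots> \<longleftrightarrow> (\<forall>j<m. f (a (k + j)) \<noteq> f (a (k + Suc j)))"
  proof (intro iffI allI impI)
    fix i assume shifted: "\<forall>j<m. f (a (k + j)) \<noteq> f (a (k + Suc j))" and "k \<le> i \<and> i < k + m"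
    then have "i - k < m" "i = k + (i - k)" by auto
    then show "f (a i) \<noteq> f (a (i + 1))" using shifted by (metis add_Suc_right Suc_eq_plus1)
  qed simp
  also have "\<dots> \<longleftrightarrow> distinct_adj t"
  proof -
    have "f (a (k + j)) = t ! j" "f (a (k + Suc j)) = t ! Suc j" if "j < m" for j
      using that assms(3)[of j] assms(3)[of "Suc j"] by simp_all
    then show ?thesis using assms(2) by (auto simp: distinct_adj_conv_nth)
  qed
  finally show ?thesis .
qed

lemma distinct_iff_nth_less: "distinct t \<longleftrightarrow> (\<forall>i j. i < j \<and> j < length t \<longrightarrow> t ! i \<noteq> t ! j)"
  unfolding distinct_conv_nth
proof (intro iffI allI impI)
  fix i j assume h: "\<forall>i j. i < j \<and> j < length t \<longrightarrow> t ! i \<noteq> t ! j"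
    and ij: "i < length t" "j < length t" "i \<noteq> j"
  have "t ! i \<noteq> t ! j" if "i < j" using h that ij(2) by blast
  moreover have "t ! j \<noteq> t ! i" if "j < i" using h that ij(1) by blast
  ultimately show "t ! i \<noteq> t ! j" using ij(3) by (metis linorder_neqE_nat)
qed auto

lemma properly_colors_clique_edges:
  assumes "inj a" and "length t = Suc m" and "\<And>i. i \<le> m \<Longrightarrow> f (a (k + i)) = t ! i"
  shows "properly_colors {{a i, a j} | i j. k \<le> i \<and> i < j \<and> j \<le> k + m} f \<longleftrightarrow> distinct t"
proof -
  have "properly_colors {{a i, a j} | i j. k \<le> i \<and> i < j \<and> j \<le> k + m} f
      \<longleftrightarrow> (\<forall>i j. k \<le> i \<and> i < j \<and> j \<le> k + m \<longrightarrow> f (a i) \<noteq> f (a j))"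
    using injD[OF assms(1)] by (auto simp: properly_colors_edge_family2)
  also have "\<dots> \<longleftrightarrow> (\<forall>i j. i < j \<and> j \<le> m \<longrightarrow> f (a (k + i)) \<noteq> f (a (k + j)))"
  proof (intro iffI allI impI)
    fix i j assume shifted: "\<forall>i j. i < j \<and> j \<le> m \<longrightarrow> f (a (k + i)) \<noteq> f (a (k + j))"
      and "k \<le> i \<and> i < j \<and> j \<le> k + m"
    then have "i - k < j - k \<and> j - k \<le> m" "i = k + (i - k)" "j = k + (j - k)" by auto
    then show "f (a i) \<noteq> f (a j)" using shifted by metis
  qed simp
  also have "\<dots> \<longleftrightarrow> (\<forall>i j. i < j \<and> j < length t \<longrightarrow> t ! i \<noteq> t ! j)"
    using assms(2,3) by (auto simp: less_Suc_eq_le)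
  also have "\<dots> \<longleftrightarrow> distinct t"
    by (rule distinct_iff_nth_less[symmetric])
  finally show ?thesis .
qed

lemma tail_verts_add: "tail_verts V (k + m) = tail_verts V k \<union> Inr ` {Suc k..k + m}"
proof -
  have "{1..k + m} = {1..k} \<union> {Suc k..k + m}" by auto
  then show ?thesis by (simp add: tail_verts_def image_Un Un_assoc)
qed

lemma tail_verts_disjoint: "tail_verts V k \<inter> Inr ` {Suc k..k + m} = {}"
  by (auto simp: tail_verts_def)

lemma finite_tail_verts: "finite V \<Longrightarrow> finite (tail_verts V k)"
  by (simp add: tail_verts_def)

lemma cp_node_in_tail_verts: "v \<in> V \<Longrightarrow> i \<le> k \<Longrightarrow> cp_node v i \<in> tail_verts V k"
  by (auto simp: cp_node_def tail_verts_def)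

lemma tail_edges_subset:
  assumes "simple_graph V E" and "v \<in> V"
  shows "\<forall>e\<in>tail_edges E v k. e \<subseteq> tail_verts V k"
proof
  fix e assume "e \<in> tail_edges E v k"
  then consider e' where "e = Inl ` e'" "e' \<in> E" | i where "e = {cp_node v i, cp_node v (i + 1)}" "i < k"
    unfolding tail_edges_def by blast
  then show "e \<subseteq> tail_verts V k"
  proof cases
    case 1
    then show ?thesis using assms(1) by (auto simp: simple_graph_def tail_verts_def)
  next
    case 2
    then show ?thesis using assms(2) by (simp add: cp_node_in_tail_verts)
  qed
qed

lemma tail_edges_add:
  "tail_edges E v (k + m) = tail_edges E v k \<union> {{cp_node v i, cp_node v (i + 1)} | i. k \<le> i \<and> i < k + m}"
proof -
  have "i < k + m \<longleftrightarrow> i < k \<or> k \<le> i \<and> i < k + m" for i by auto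
  then show ?thesis unfolding tail_edges_def by blast
qed

lemma cp_edges_eq:
  "cp_edges E v g k = tail_edges E v k \<union> {{cp_node v i, cp_node v j} | i j. k \<le> i \<and> i < j \<and> j \<le> k + g - 1}"
  by (simp add: cp_edges_def tail_edges_def)

lemma inj_cp_node: "inj (cp_node v)"
  by (rule injI) (simp add: cp_node_def split: if_splits)

lemma extend_coloring_cp_node:
  assumes "v \<in> V" and "i \<le> length s"
  shows "extend_coloring \<kappa> (tail_verts V k) k s (cp_node v (k + i)) = (\<kappa> (cp_node v k) # s) ! i"
proof (cases i)
  case 0
  then show ?thesis using assms(1) by (simp add: cp_node_in_tail_verts extend_coloring_old)
next
  case (Suc j)
  have "Inr (Suc (k + j)) \<notin> tail_verts V k" by (auto simp: tail_verts_def)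
  then show ?thesis
    using Suc assms(2) by (simp add: cp_node_def extend_coloring_new Suc_le_eq)
qed

lemma csf_tail_verts_add:
  assumes "simple_graph V E" and "v \<in> V"
  shows "csf (tail_verts V (k + m)) (tail_edges E v (k + m)) =
    (\<lambda>\<delta>. \<Sum>\<kappa>\<in>{\<kappa>\<in>proper_colorings (tail_verts V k) (tail_edges E v k).
                  image_mset \<kappa> (mset_set (tail_verts V k)) \<subseteq># \<delta>}.
       chain_sf m (\<kappa> (cp_node v k)) (\<delta> - image_mset \<kappa> (mset_set (tail_verts V k))))"
proof -
  have fin: "finite V" using assms(1) by (simp add: simple_graph_def)
  have path: "properly_colors {{cp_node v i, cp_node v (i + 1)} | i. k \<le> i \<and> i < k + m}
          (extend_coloring \<kappa> (tail_verts V k) k s)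
        \<longleftrightarrow> distinct_adj (\<kappa> (cp_node v k) # s)" if "length s = m" for \<kappa> s
    using that assms(2)
    by (intro properly_colors_path_edges inj_cp_node) (simp_all add: extend_coloring_cp_node)
  show ?thesis
    unfolding tail_verts_add tail_edges_add
    by (intro ext) (simp only: csf_extend_vertices[OF finite_tail_verts[OF fin] tail_verts_disjoint
        tail_edges_subset[OF assms]] path chain_sf_def[symmetric] cong: conj_cong)
qed

lemma csf_cp_verts:
  assumes "simple_graph V E" and "v \<in> V" and "g \<ge> 1"
  shows "csf (cp_verts V g k) (cp_edges E v g k) \<alpha> =
    (\<Sum>\<kappa>\<in>{\<kappa>\<in>proper_colorings (tail_verts V k) (tail_edges E v k).
           image_mset \<kappa> (mset_set (tail_verts V k)) \<subseteq># \<alpha>}.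
       int (fact (g - 1)) * fresh_elem_sf (g - 1) (\<kappa> (cp_node v k)) (\<alpha> - image_mset \<kappa> (mset_set (tail_verts V k))))"
proof -
  have fin: "finite V" using assms(1) by (simp add: simple_graph_def)
  have clique: "properly_colors {{cp_node v i, cp_node v j} | i j. k \<le> i \<and> i < j \<and> j \<le> k + (g - 1)}
          (extend_coloring \<kappa> (tail_verts V k) k s)
        \<longleftrightarrow> distinct (\<kappa> (cp_node v k) # s)" if "length s = g - 1" for \<kappa> s
    using that assms(2)
    by (intro properly_colors_clique_edges inj_cp_node) (simp_all add: extend_coloring_cp_node)
  have "cp_verts V g k = tail_verts V (k + (g - 1))"
    and "cp_edges E v g k = tail_edges E v k
           \<union> {{cp_node v i, cp_node v j} | i j. k \<le> i \<and> i < j \<and> j \<le> k + (g - 1)}"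
    using assms(3) by (simp_all add: cp_verts_def tail_verts_def cp_edges_eq)
  then show ?thesis
    unfolding tail_verts_add
    by (simp only: csf_extend_vertices[OF finite_tail_verts[OF fin] tail_verts_disjoint
        tail_edges_subset[OF assms(1,2)]] clique card_distinct_lists_with_mset cong: conj_cong)
qed

theorem proposition3p1:
  fixes V :: "'a set" and E :: "'a set set" and v :: 'a and k g :: nat
  assumes "simple_graph V E" and "v \<in> V" and "g \<ge> 1"
  shows "csf (cp_verts V g k) (cp_edges E v g k) =
    (\<lambda>\<alpha>. int (fact (g - 1)) *
       (\<Sum>l = 0..g-1. (1 - int l) *
          sf_mult (elem_sf l) (csf (tail_verts V (k+g-1-l)) (tail_edges E v (k+g-1-l))) \<alpha>))"
proof
  fix \<alpha>
  let ?img = "\<lambda>\<kappa>. image_mset \<kappa> (mset_set (tail_verts V k))"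
  let ?C = "{\<kappa>\<in>proper_colorings (tail_verts V k) (tail_edges E v k). ?img \<kappa> \<subseteq># \<alpha>}"
  let ?c = "\<lambda>\<kappa>. \<kappa> (cp_node v k)"
  have "finite ?C"
    using assms(1) by (simp add: finite_colorings_below finite_tail_verts simple_graph_def)
  then have tail: "sf_mult (elem_sf l) (csf (tail_verts V (k+g-1-l)) (tail_edges E v (k+g-1-l))) \<alpha>
      = (\<Sum>\<kappa>\<in>?C. sf_mult (elem_sf l) (chain_sf (g - 1 - l) (?c \<kappa>)) (\<alpha> - ?img \<kappa>))"
    if "l \<in> {0..g-1}" for l
    using that assms csf_tail_verts_add[OF assms(1,2), of k "g - 1 - l"] sf_mult_shifted_sum
    by (simp add: add_diff_assoc)
  have "(\<Sum>l = 0..g-1. (1 - int l) *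
          sf_mult (elem_sf l) (csf (tail_verts V (k+g-1-l)) (tail_edges E v (k+g-1-l))) \<alpha>)
      = (\<Sum>l = 0..g-1. \<Sum>\<kappa>\<in>?C. (1 - int l) * sf_mult (elem_sf l) (chain_sf (g - 1 - l) (?c \<kappa>)) (\<alpha> - ?img \<kappa>))"
    by (rule sum.cong[OF refl]) (simp only: tail sum_distrib_left)
  also have "\<dots> = (\<Sum>\<kappa>\<in>?C. fresh_elem_sf (g - 1) (?c \<kappa>) (\<alpha> - ?img \<kappa>))"
    by (subst sum.swap) (simp only: fresh_elem_sf_eq_chain_sum)
  finally show "csf (cp_verts V g k) (cp_edges E v g k) \<alpha> = int (fact (g - 1)) *
       (\<Sum>l = 0..g-1. (1 - int l) *
          sf_mult (elem_sf l) (csf (tail_verts V (k+g-1-l)) (tail_edges E v (k+g-1-l))) \<alpha>)"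
    by (simp only: csf_cp_verts[OF assms] sum_distrib_left)
qed

end
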